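(* Let $R$ be a connected graph with vertices $v_1,\dots,v_r$, let $H$ be a rooted graph on $n$ vertices, let $\alpha\in[0,1]$, and let $\rho_1(\alpha),\dots,\rho_r(\alpha)$ be the eigenvalues (with multiplicity) of $A_\alpha(R)$. Then, as multisets, \[ \mathrm{Spec}\big(A_\alpha(R\{H\})\big)=\bigcup_{j=1}^{r}\mathrm{Spec}\big(A_\alpha(H)+\rho_j(\alpha)E\big). \]
   Context: For a graph $G$ and $\alpha\in[0,1]$, $A_\alpha(G)=\alpha D(G)+(1-\alpha)A(G)$, where $D(G)$ is the diagonal matrix of vertex degrees and $A(G)$ the adjacency matrix. For a connected graph $R$ on vertices $v_1,\dots,v_r$ and a rooted graph $H$, $R\{H\}$ is the graph obtained from $R$ and $r$ copies of $H$ by identifying the root of the $i$-th copy of $H$ with $v_i$, for each $i$. Vertices of $H$ are ordered so that the root is the last ($n$-th) vertex, and $E$ is the $n\times n$ matrix with $1$ in entry $(n,n)$ (the root's diagonal position) and zeros elsewhere. $\mathrm{Spec}(M)$ denotes the multiset of eigenvalues of $M$, and unions of spectra are multiset unions. *)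

theory Defs
  imports "Jordan_Normal_Form.Char_Poly"
begin

definition simple_graph :: "nat \<Rightarrow> (nat \<Rightarrow> nat \<Rightarrow> bool) \<Rightarrow> bool" where
  "simple_graph m adj \<longleftrightarrow>
     (\<forall>i<m. \<forall>j<m. adj i j \<longleftrightarrow> adj j i) \<and> (\<forall>i<m. \<not> adj i i)"

definition connected_graph :: "nat \<Rightarrow> (nat \<Rightarrow> nat \<Rightarrow> bool) \<Rightarrow> bool" where
  "connected_graph m adj \<longleftrightarrow> m \<ge> 1 \<and>
     (\<forall>i<m. \<forall>j<m. (\<lambda>x y. x < m \<and> y < m \<and> adj x y)\<^sup>*\<^sup>* i j)"

definition degree :: "nat \<Rightarrow> (nat \<Rightarrow> nat \<Rightarrow> bool) \<Rightarrow> nat \<Rightarrow> nat" where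
  "degree m adj i = card {j. j < m \<and> adj i j}"

definition A_alpha :: "real \<Rightarrow> nat \<Rightarrow> (nat \<Rightarrow> nat \<Rightarrow> bool) \<Rightarrow> real mat" where
  "A_alpha \<alpha> m adj = \<alpha> \<cdot>\<^sub>m mat m m (\<lambda>(i,j). if i = j then real (degree m adj i) else 0)
      + (1 - \<alpha>) \<cdot>\<^sub>m mat m m (\<lambda>(i,j). if adj i j then 1 else 0)"

text \<open>Rooted product R{H}: R on {0..<r}, H on {0..<n} with root n-1.
  Vertex k of the i-th copy of H is encoded as i*n + k; the root of the i-th copy
  (i*n + (n-1)) is identified with vertex v_i of R.\<close>
definition rooted_product_adj ::
  "nat \<Rightarrow> (nat \<Rightarrow> nat \<Rightarrow> bool) \<Rightarrow> nat \<Rightarrow> (nat \<Rightarrow> nat \<Rightarrow> bool) \<Rightarrow> nat \<Rightarrow> nat \<Rightarrow> bool" where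
  "rooted_product_adj r adjR n adjH u v \<longleftrightarrow>
     (u div n = v div n \<and> adjH (u mod n) (v mod n)) \<or>
     (u mod n = n - 1 \<and> v mod n = n - 1 \<and> adjR (u div n) (v div n))"

definition root_mat :: "nat \<Rightarrow> real mat" where
  "root_mat n = mat n n (\<lambda>(i,j). if i = n - 1 \<and> j = n - 1 then 1 else 0)"

definition Spec :: "real mat \<Rightarrow> complex multiset" where
  "Spec M = (THE S. char_poly (map_mat complex_of_real M) = (\<Prod>a\<in>#S. [:- a, 1:]))"

end

theory Submission
  imports Defs "Jordan_Normal_Form.Schur_Decomposition"
begin

text \<open>Numbering the vertices of copy i of H as i * n + k, the adjacency matrix of R{H} is
  I_r \<otimes> A(H) + A(R) \<otimes> E and its degree matrix is I_r \<otimes> D(H) + D(R) \<otimes> E, so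
  A_alpha(R{H}) = I_r \<otimes> A_alpha(H) + A_alpha(R) \<otimes> E. Conjugating by P \<otimes> I_n, where
  P T P^-1 is a Schur triangularisation of A_alpha(R) over the complex numbers, gives the block upper
  triangular matrix I_r \<otimes> A_alpha(H) + T \<otimes> E, whose diagonal blocks are
  A_alpha(H) + rho_j E. Its characteristic polynomial is the product of theirs.\<close>

lemma mult_add_less_mult:
  assumes "i < a" "k < c"
  shows "i * c + k < a * (c::nat)"
proof -
  have "i * c + k < Suc i * c" using assms by simp
  also have "\<dots> \<le> a * c" using assms by (intro mult_le_mono1) simp
  finally show ?thesis .
qed

lemma mult_add_eq_mult_add_iff:
  assumes "k < c" "l < (c::nat)"
  shows "i * c + k = j * c + l \<longleftrightarrow> i = j \<and> k = l"
proof
  assume "i * c + k = j * c + l"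
  then have "(i * c + k) div c = (j * c + l) div c" "(i * c + k) mod c = (j * c + l) mod c"
    by simp_all
  with assms show "i = j \<and> k = l" by simp
qed simp

lemma less_multE:
  assumes "u < a * (c::nat)"
  obtains i k where "u = i * c + k" "i < a" "k < c"
proof
  have "0 < c" using assms by (auto intro: Nat.gr0I)
  then show "u mod c < c" by simp
  show "u = u div c * c + u mod c" by simp
  show "u div c < a" using assms by (simp add: less_mult_imp_div_less)
qed

lemma sum_lessThan_mult:
  "(\<Sum>w < b * d. f w) = (\<Sum>i < b. \<Sum>k < (d::nat). f (i * d + k))"
proof (induction b)
  case (Suc b)
  have "(\<Sum>w < Suc b * d. f w) = (\<Sum>w \<in> {0..<b * d}. f w) + (\<Sum>w \<in> {b * d..<b * d + d}. f w)"
    by (subst sum.atLeastLessThan_concat) (auto simp: atLeast0LessThan add.commute)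
  also have "(\<Sum>w \<in> {b * d..<b * d + d}. f w) = (\<Sum>k \<in> {0..<d}. f (k + b * d))"
    using sum.shift_bounds_nat_ivl[of f 0 "b * d" d] by (simp add: add.commute)
  finally show ?case using Suc by (simp add: atLeast0LessThan add.commute)
qed simp

definition kron :: "'a::times mat \<Rightarrow> 'a mat \<Rightarrow> 'a mat" where
  "kron A B = mat (dim_row A * dim_row B) (dim_col A * dim_col B)
     (\<lambda>(u, v). A $$ (u div dim_row B, v div dim_col B) * B $$ (u mod dim_row B, v mod dim_col B))"

lemma dim_kron [simp]:
  "dim_row (kron A B) = dim_row A * dim_row B"
  "dim_col (kron A B) = dim_col A * dim_col B"
  unfolding kron_def by simp_all

lemma kron_carrier_mat [simp]:
  "A \<in> carrier_mat a b \<Longrightarrow> B \<in> carrier_mat c d \<Longrightarrow> kron A B \<in> carrier_mat (a * c) (b * d)"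
  by auto

lemma index_kron:
  assumes "A \<in> carrier_mat a b" "B \<in> carrier_mat c d" "i < a" "k < c" "j < b" "l < d"
  shows "kron A B $$ (i * c + k, j * d + l) = A $$ (i, j) * B $$ (k, l)"
  using assms mult_add_less_mult[of i a k c] mult_add_less_mult[of j b l d]
  by (auto simp: kron_def)

lemma kron_mult:
  fixes A :: "'a::comm_semiring_1 mat"
  assumes A: "A \<in> carrier_mat a b" and B: "B \<in> carrier_mat c d"
    and C: "C \<in> carrier_mat b e" and D: "D \<in> carrier_mat d f"
  shows "kron A B * kron C D = kron (A * C) (B * D)"
proof (rule eq_matI)
  fix u v assume "u < dim_row (kron (A * C) (B * D))" "v < dim_col (kron (A * C) (B * D))"
  then have "u < a * c" "v < e * f" using A B C D by auto
  then obtain i k j l where u: "u = i * c + k" "i < a" "k < c" and v: "v = j * f + l" "j < e" "l < f"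
    by (elim less_multE)
  have "(kron A B * kron C D) $$ (u, v) = (\<Sum>w < b * d. kron A B $$ (u, w) * kron C D $$ (w, v))"
    using u v A B C D mult_add_less_mult
    by (simp add: scalar_prod_def row_def col_def lessThan_atLeast0)
  also have "\<dots> = (\<Sum>x < b. \<Sum>y < d. (A $$ (i, x) * C $$ (x, j)) * (B $$ (k, y) * D $$ (y, l)))"
    unfolding sum_lessThan_mult u(1) v(1)
  proof (intro sum.cong refl)
    fix x y assume "x \<in> {..<b}" "y \<in> {..<d}"
    then show "kron A B $$ (i * c + k, x * d + y) * kron C D $$ (x * d + y, j * f + l) =
        (A $$ (i, x) * C $$ (x, j)) * (B $$ (k, y) * D $$ (y, l))"
      using index_kron[OF A B u(2,3), of x y] index_kron[OF C D _ _ v(2,3), of x y]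
      by (simp add: ac_simps)
  qed
  also have "\<dots> = (A * C) $$ (i, j) * (B * D) $$ (k, l)"
    using A B C D u v
    by (simp add: sum_product scalar_prod_def row_def col_def lessThan_atLeast0)
  also have "\<dots> = kron (A * C) (B * D) $$ (u, v)"
    using A B C D u v by (simp add: index_kron[of _ a e _ c f])
  finally show "(kron A B * kron C D) $$ (u, v) = kron (A * C) (B * D) $$ (u, v)" .
qed (use A B C D in auto)

lemma kron_one_one: "kron (1\<^sub>m a) (1\<^sub>m c) = (1\<^sub>m (a * c) :: 'a::semiring_1 mat)"
proof (rule eq_matI)
  fix u v assume "u < dim_row (1\<^sub>m (a * c) :: 'a mat)" "v < dim_col (1\<^sub>m (a * c) :: 'a mat)"
  then have "u < a * c" "v < a * c" by simp_all
  then obtain i k j l where "u = i * c + k" "i < a" "k < c" "v = j * c + l" "j < a" "l < c"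
    by (elim less_multE)
  then show "kron (1\<^sub>m a) (1\<^sub>m c) $$ (u, v) = (1\<^sub>m (a * c) :: 'a mat) $$ (u, v)"
    by (simp add: index_kron[of _ a a _ c c] mult_add_eq_mult_add_iff mult_add_less_mult)
qed auto

context semiring_hom
begin

lemma mat_hom_kron: "mat\<^sub>h (kron A B) = kron (mat\<^sub>h A) (mat\<^sub>h B)"
proof (rule eq_matI)
  fix u v assume "u < dim_row (kron (mat\<^sub>h A) (mat\<^sub>h B))" "v < dim_col (kron (mat\<^sub>h A) (mat\<^sub>h B))"
  then have "u < dim_row A * dim_row B" "v < dim_col A * dim_col B" by simp_all
  then obtain i k j l where "u = i * dim_row B + k" "i < dim_row A" "k < dim_row B"
    and "v = j * dim_col B + l" "j < dim_col A" "l < dim_col B"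
    by (elim less_multE)
  then show "mat\<^sub>h (kron A B) $$ (u, v) = kron (mat\<^sub>h A) (mat\<^sub>h B) $$ (u, v)"
    by (simp add: index_kron[of _ "dim_row A" "dim_col A" _ "dim_row B" "dim_col B"]
        mult_add_less_mult hom_mult)
qed auto

lemma mat_hom_add:
  "A \<in> carrier_mat m n \<Longrightarrow> B \<in> carrier_mat m n \<Longrightarrow> mat\<^sub>h (A + B) = mat\<^sub>h A + mat\<^sub>h B"
  by (rule eq_matI) (auto simp: hom_add)

lemma mat_hom_smult: "mat\<^sub>h (x \<cdot>\<^sub>m A) = hom x \<cdot>\<^sub>m mat\<^sub>h A"
  by (rule eq_matI) (auto simp: hom_mult)

end

definition diag_block :: "nat \<Rightarrow> 'a mat \<Rightarrow> nat \<Rightarrow> 'a mat" where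
  "diag_block n M i = mat n n (\<lambda>(k, l). M $$ (i * n + k, i * n + l))"

definition block_upper_triangular :: "nat \<Rightarrow> nat \<Rightarrow> 'a::zero mat \<Rightarrow> bool" where
  "block_upper_triangular r n M \<longleftrightarrow>
     (\<forall>i i' k k'. i' < i \<longrightarrow> i < r \<longrightarrow> k < n \<longrightarrow> k' < n \<longrightarrow> M $$ (i * n + k, i' * n + k') = 0)"

lemma det_block_upper_triangular:
  fixes M :: "'a::idom mat"
  assumes "M \<in> carrier_mat (r * n) (r * n)" and "block_upper_triangular r n M"
  shows "det M = (\<Prod>i<r. det (diag_block n M i))"
  using assms
proof (induction r arbitrary: M)
  case (Suc r)
  note M = Suc.prems(1)
  have zero: "M $$ (i * n + k, i' * n + k') = 0" if "i' < i" "i < Suc r" "k < n" "k' < n" for i i' k k'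
    using Suc.prems(2) that unfolding block_upper_triangular_def by blast
  define A1 where "A1 = mat (r * n) (r * n) (\<lambda>ij. M $$ ij)"
  define A2 where "A2 = mat (r * n) n (\<lambda>(i, j). M $$ (i, j + r * n))"
  define A3 where "A3 = mat n (r * n) (\<lambda>(i, j). M $$ (i + r * n, j))"
  define A4 where "A4 = mat n n (\<lambda>(i, j). M $$ (i + r * n, j + r * n))"
  have dims: "dim_row M = r * n + n" "dim_col M = r * n + n" using M by auto
  have "split_block M (r * n) (r * n) = (A1, A2, A3, A4)"
    unfolding split_block_def Let_def A1_def A2_def A3_def A4_def using dims by simp
  note S = split_block[OF this dims]
  have "A3 = 0\<^sub>m n (r * n)"
  proof (rule eq_matI)
    fix x y assume "x < dim_row (0\<^sub>m n (r * n) :: 'a mat)" "y < dim_col (0\<^sub>m n (r * n) :: 'a mat)"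
    then have x: "x < n" and "y < r * n" by auto
    then obtain i' k' where y: "y = i' * n + k'" "i' < r" "k' < n" by (elim less_multE)
    have "A3 $$ (x, y) = M $$ (r * n + x, i' * n + k')"
      unfolding A3_def using x \<open>y < r * n\<close> y(1) by (simp add: add.commute)
    also have "\<dots> = 0" using zero[of i' r x k'] x y by simp
    finally show "A3 $$ (x, y) = 0\<^sub>m n (r * n) $$ (x, y)" using x \<open>y < r * n\<close> by simp
  qed (auto simp: A3_def)
  then have "det M = det A1 * det A4"
    unfolding S(5) using S(1,2,4) by (intro det_four_block_mat_lower_left_zero)
  moreover have "det A1 = (\<Prod>i<r. det (diag_block n A1 i))"
  proof (rule Suc.IH)
    show "block_upper_triangular r n A1"
      unfolding block_upper_triangular_def A1_def
      using zero mult_add_less_mult by (simp add: less_trans[of _ r])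
  qed (rule S(1))
  moreover have "diag_block n A1 i = diag_block n M i" if "i < r" for i
    unfolding diag_block_def A1_def using that mult_add_less_mult by (intro eq_matI) auto
  moreover have "A4 = diag_block n M r"
    unfolding A4_def diag_block_def by (intro eq_matI) (auto simp: add.commute)
  ultimately show ?case by simp
qed simp

lemma char_poly_block_upper_triangular:
  fixes M :: "'a::idom mat"
  assumes M: "M \<in> carrier_mat (r * n) (r * n)" and "block_upper_triangular r n M"
  shows "char_poly M = (\<Prod>i<r. char_poly (diag_block n M i))"
proof -
  have "block_upper_triangular r n (char_poly_matrix M)"
    unfolding block_upper_triangular_def
  proof (intro allI impI)
    fix i i' k k' assume "i' < i" "i < r" "k < n" "k' < n"
    moreover from this have "i * n + k \<noteq> i' * n + k'" by (simp add: mult_add_eq_mult_add_iff)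
    ultimately show "char_poly_matrix M $$ (i * n + k, i' * n + k') = 0"
      using M assms(2) mult_add_less_mult[of i r k n] mult_add_less_mult[of i' r k' n]
      unfolding block_upper_triangular_def by (simp add: char_poly_matrix_def)
  qed
  then have "det (char_poly_matrix M) = (\<Prod>i<r. det (diag_block n (char_poly_matrix M) i))"
    using M by (intro det_block_upper_triangular) simp_all
  moreover have "diag_block n (char_poly_matrix M) i = char_poly_matrix (diag_block n M i)" if "i < r" for i
    using M that mult_add_less_mult[of i r _ n]
    unfolding diag_block_def char_poly_matrix_def by (intro eq_matI) auto
  ultimately show ?thesis unfolding char_poly_def by simp
qed

lemma block_upper_triangular_kron:
  fixes T :: "'a::semiring_1 mat"
  assumes "upper_triangular T" "T \<in> carrier_mat r r" "B \<in> carrier_mat n n" "C \<in> carrier_mat n n"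
  shows "block_upper_triangular r n (kron (1\<^sub>m r) B + kron T C)"
  unfolding block_upper_triangular_def
proof (intro allI impI)
  fix i i' k k' assume *: "i' < i" "i < r" "k < n" "k' < n"
  then have "T $$ (i, i') = 0" using assms(1,2) unfolding upper_triangular_def by auto
  with * assms(2-4) show "(kron (1\<^sub>m r) B + kron T C) $$ (i * n + k, i' * n + k') = 0"
    by (simp add: mult_add_less_mult index_kron[of _ r r _ n n])
qed

lemma diag_block_kron:
  fixes T :: "'a::semiring_1 mat"
  assumes "T \<in> carrier_mat r r" "B \<in> carrier_mat n n" "C \<in> carrier_mat n n" "i < r"
  shows "diag_block n (kron (1\<^sub>m r) B + kron T C) i = B + T $$ (i, i) \<cdot>\<^sub>m C"
  using assms
  by (intro eq_matI) (auto simp: diag_block_def mult_add_less_mult index_kron[of _ r r _ n n])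

lemma similar_mat_kron:
  fixes A :: "'a::comm_ring_1 mat"
  assumes sim: "similar_mat_wit A T P Q" and A: "A \<in> carrier_mat r r"
    and B: "B \<in> carrier_mat n n" and C: "C \<in> carrier_mat n n"
  shows "similar_mat (kron (1\<^sub>m r) B + kron A C) (kron (1\<^sub>m r) B + kron T C)"
proof -
  from similar_mat_witD2[OF A sim]
  have PQ: "P * Q = 1\<^sub>m r" "Q * P = 1\<^sub>m r" "A = P * T * Q"
    and T: "T \<in> carrier_mat r r" and P: "P \<in> carrier_mat r r" and Q: "Q \<in> carrier_mat r r"
    by auto
  let ?P = "kron P (1\<^sub>m n)" and ?Q = "kron Q (1\<^sub>m n)"
  have "?P * (kron (1\<^sub>m r) B + kron T C) = kron P B + kron (P * T) C"
    using P T B C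
    by (simp add: mult_add_distrib_mat[of _ "r * n" "r * n" _ "r * n"] kron_mult[of _ r r _ n n _ r _ n])
  then have "?P * (kron (1\<^sub>m r) B + kron T C) * ?Q = kron (P * Q) B + kron (P * T * Q) C"
    using P Q T B C
    by (simp add: add_mult_distrib_mat[of _ "r * n" "r * n" _ _ "r * n"] kron_mult[of _ r r _ n n _ r _ n])
  then have "kron (1\<^sub>m r) B + kron A C = ?P * (kron (1\<^sub>m r) B + kron T C) * ?Q"
    using PQ by simp
  moreover have "?P * ?Q = 1\<^sub>m (r * n)" "?Q * ?P = 1\<^sub>m (r * n)"
    using kron_mult[OF P one_carrier_mat Q one_carrier_mat]
      kron_mult[OF Q one_carrier_mat P one_carrier_mat] PQ
    by (simp_all add: kron_one_one)
  ultimately have "similar_mat_wit (kron (1\<^sub>m r) B + kron A C) (kron (1\<^sub>m r) B + kron T C) ?P ?Q"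
    using A B C P Q T by (intro similar_mat_witI) auto
  then show ?thesis unfolding similar_mat_def by blast
qed

lemma char_poly_kron_sum:
  fixes A :: "complex mat"
  assumes A: "A \<in> carrier_mat r r" and B: "B \<in> carrier_mat n n" and C: "C \<in> carrier_mat n n"
    and cp: "char_poly A = (\<Prod>a\<leftarrow>as. [:- a, 1:])"
  shows "char_poly (kron (1\<^sub>m r) B + kron A C) = (\<Prod>i<r. char_poly (B + as ! i \<cdot>\<^sub>m C))"
proof -
  obtain T P Q where "schur_decomposition A as = (T, P, Q)" by (cases "schur_decomposition A as")
  from schur_decomposition[OF A cp this]
  have sim: "similar_mat_wit A T P Q" and ut: "upper_triangular T" and diag: "diag_mat T = as"
    by auto
  have T: "T \<in> carrier_mat r r" using similar_mat_witD2[OF A sim] by auto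
  have "char_poly (kron (1\<^sub>m r) B + kron A C) = char_poly (kron (1\<^sub>m r) B + kron T C)"
    by (intro char_poly_similar similar_mat_kron[OF sim A B C])
  also have "\<dots> = (\<Prod>i<r. char_poly (diag_block n (kron (1\<^sub>m r) B + kron T C) i))"
    using T B C by (intro char_poly_block_upper_triangular block_upper_triangular_kron[OF ut]) auto
  also have "\<dots> = (\<Prod>i<r. char_poly (B + as ! i \<cdot>\<^sub>m C))"
    using T B C diag by (intro prod.cong refl) (auto simp: diag_block_kron diag_mat_def)
  finally show ?thesis .
qed

lemma proots_prod_linear_factors: "proots (\<Prod>x\<in>#S. [:- x, 1:]) = (S :: 'a::idom multiset)"
proof (induction S)
  case (add x S)
  have "(\<Prod>x\<in>#S. [:- x, 1:]) \<noteq> 0" by auto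
  with add show ?case by (simp add: proots_mult del: mult_pCons_left)
qed simp

lemma Spec_eqI:
  assumes "char_poly (map_mat complex_of_real M) = (\<Prod>x\<in>#S. [:- x, 1:])"
  shows "Spec M = S"
  unfolding Spec_def
proof (rule the_equality)
  fix S' assume "char_poly (map_mat complex_of_real M) = (\<Prod>x\<in>#S'. [:- x, 1:])"
  with assms show "S' = S" by (metis proots_prod_linear_factors)
qed (rule assms)

lemma char_poly_eq_prod_Spec:
  assumes "M \<in> carrier_mat n n"
  shows "char_poly (map_mat complex_of_real M) = (\<Prod>x\<in>#Spec M. [:- x, 1:])"
proof -
  obtain as where "char_poly (map_mat complex_of_real M) = (\<Prod>a\<leftarrow>as. [:- a, 1:])"
    using char_poly_factorized[of "map_mat complex_of_real M" n] assms by auto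
  then have "char_poly (map_mat complex_of_real M) = (\<Prod>x\<in>#mset as. [:- x, 1:])"
    by (metis mset_map prod_mset_prod_list)
  then show ?thesis using Spec_eqI by metis
qed

lemma prod_mset_image_sum:
  "(\<Prod>x\<in>#(\<Sum>i\<in>I. S i). f x) = (\<Prod>i\<in>I. \<Prod>x\<in>#S i. (f x :: 'b::comm_monoid_mult))"
  by (induction I rule: infinite_finite_induct) auto

lemma dim_A_alpha [simp]:
  "dim_row (A_alpha \<alpha> m adj) = m" "dim_col (A_alpha \<alpha> m adj) = m"
  unfolding A_alpha_def by simp_all

lemma A_alpha_carrier_mat [simp]: "A_alpha \<alpha> m adj \<in> carrier_mat m m"
  unfolding A_alpha_def by simp

lemma index_A_alpha:
  "u < m \<Longrightarrow> v < m \<Longrightarrow> A_alpha \<alpha> m adj $$ (u, v) =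
     \<alpha> * (if u = v then real (degree m adj u) else 0) + (1 - \<alpha>) * (if adj u v then 1 else 0)"
  unfolding A_alpha_def by simp

lemma dim_root_mat [simp]: "dim_row (root_mat n) = n" "dim_col (root_mat n) = n"
  unfolding root_mat_def by simp_all

lemma root_mat_carrier_mat [simp]: "root_mat n \<in> carrier_mat n n"
  unfolding root_mat_def by simp

lemma index_root_mat:
  "k < n \<Longrightarrow> l < n \<Longrightarrow> root_mat n $$ (k, l) = (if k = n - 1 \<and> l = n - 1 then 1 else 0)"
  unfolding root_mat_def by simp

lemma inj_on_mult_add: "inj_on (\<lambda>(j, l). j * n + l) (UNIV \<times> {..<n :: nat})"
  unfolding inj_on_def by (auto simp: mult_add_eq_mult_add_iff)

lemma rooted_product_adj_mult_add:
  assumes "k < n" "l < n"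
  shows "rooted_product_adj r adjR n adjH (i * n + k) (j * n + l) \<longleftrightarrow>
    (i = j \<and> adjH k l) \<or> (k = n - 1 \<and> l = n - 1 \<and> adjR i j)"
  using assms unfolding rooted_product_adj_def by simp

lemma degree_rooted_product:
  assumes R: "simple_graph r adjR" and i: "i < r" and k: "k < n"
  shows "degree (r * n) (rooted_product_adj r adjR n adjH) (i * n + k) =
    degree n adjH k + (if k = n - 1 then degree r adjR i else 0)"
proof -
  have root: "n - 1 < n" using k by simp
  define inH where "inH = {i} \<times> {l. l < n \<and> adjH k l}"
  define inR where "inR = {j. j < r \<and> adjR i j \<and> k = n - 1} \<times> {n - 1}"
  have nbrs: "{v. v < r * n \<and> rooted_product_adj r adjR n adjH (i * n + k) v} =
      (\<lambda>(j, l). j * n + l) ` (inH \<union> inR)"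
  proof (rule Set.set_eqI, rule iffI)
    fix v assume "v \<in> {v. v < r * n \<and> rooted_product_adj r adjR n adjH (i * n + k) v}"
    then have "v < r * n" and adj: "rooted_product_adj r adjR n adjH (i * n + k) v" by simp_all
    then obtain j l where v: "v = j * n + l" "j < r" "l < n" by (elim less_multE)
    with adj have "(j, l) \<in> inH \<union> inR"
      unfolding inH_def inR_def by (auto simp: rooted_product_adj_mult_add[OF k])
    with v(1) show "v \<in> (\<lambda>(j, l). j * n + l) ` (inH \<union> inR)" by force
  next
    fix v assume "v \<in> (\<lambda>(j, l). j * n + l) ` (inH \<union> inR)"
    then obtain j l where v: "v = j * n + l" and jl: "(j, l) \<in> inH \<union> inR" by auto
    then have "j < r" "l < n" using i root unfolding inH_def inR_def by auto
    with jl show "v \<in> {v. v < r * n \<and> rooted_product_adj r adjR n adjH (i * n + k) v}"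
      unfolding v inH_def inR_def
      by (auto simp: mult_add_less_mult rooted_product_adj_mult_add[OF k \<open>l < n\<close>])
  qed
  have "inj_on (\<lambda>(j, l). j * n + l) (inH \<union> inR)"
    using root by (intro inj_on_subset[OF inj_on_mult_add]) (auto simp: inH_def inR_def)
  then have "card ((\<lambda>(j, l). j * n + l) ` (inH \<union> inR)) = card (inH \<union> inR)"
    by (rule card_image)
  moreover have "\<not> adjR i i" using R i unfolding simple_graph_def by blast
  then have "card (inH \<union> inR) = card inH + card inR"
    by (intro card_Un_disjoint) (auto simp: inH_def inR_def)
  moreover have "card inH = degree n adjH k"
    unfolding inH_def degree_def by (simp add: card_cartesian_product)
  moreover have "card inR = (if k = n - 1 then degree r adjR i else 0)"
    unfolding inR_def degree_def by (simp add: card_cartesian_product)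
  ultimately show ?thesis
    unfolding degree_def[of "r * n"] nbrs by simp
qed

lemma A_alpha_rooted_product:
  assumes R: "simple_graph r adjR" and H: "simple_graph n adjH"
  shows "A_alpha \<alpha> (r * n) (rooted_product_adj r adjR n adjH) =
    kron (1\<^sub>m r) (A_alpha \<alpha> n adjH) + kron (A_alpha \<alpha> r adjR) (root_mat n)"
proof (rule eq_matI)
  fix u v assume "u < dim_row (kron (1\<^sub>m r) (A_alpha \<alpha> n adjH) + kron (A_alpha \<alpha> r adjR) (root_mat n))"
    "v < dim_col (kron (1\<^sub>m r) (A_alpha \<alpha> n adjH) + kron (A_alpha \<alpha> r adjR) (root_mat n))"
  then have "u < r * n" "v < r * n" by auto
  then obtain i k j l where u: "u = i * n + k" "i < r" "k < n" and v: "v = j * n + l" "j < r" "l < n"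
    by (elim less_multE)
  have irr: "\<not> adjH k k" "\<not> adjR i i" using H R u v unfolding simple_graph_def by auto
  have lhs: "A_alpha \<alpha> (r * n) (rooted_product_adj r adjR n adjH) $$ (u, v) =
      \<alpha> * (if i = j \<and> k = l then real (degree n adjH k + (if k = n - 1 then degree r adjR i else 0)) else 0)
      + (1 - \<alpha>) * (if (i = j \<and> adjH k l) \<or> (k = n - 1 \<and> l = n - 1 \<and> adjR i j) then 1 else 0)"
    using index_A_alpha[OF \<open>u < r * n\<close> \<open>v < r * n\<close>, of \<alpha> "rooted_product_adj r adjR n adjH"]
    unfolding u(1) v(1) mult_add_eq_mult_add_iff[OF u(3) v(3)]
      rooted_product_adj_mult_add[OF u(3) v(3)] degree_rooted_product[OF R u(2,3)]
    by simp
  have rhs: "(kron (1\<^sub>m r) (A_alpha \<alpha> n adjH) + kron (A_alpha \<alpha> r adjR) (root_mat n)) $$ (u, v) =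
      (if i = j then 1 else 0) * A_alpha \<alpha> n adjH $$ (k, l) + A_alpha \<alpha> r adjR $$ (i, j) * root_mat n $$ (k, l)"
    using \<open>u < r * n\<close> \<open>v < r * n\<close> u(2) v(2)
    unfolding u(1) v(1) by (simp add: index_kron[of _ r r _ n n, OF _ _ u(2,3) v(2,3)])
  show "A_alpha \<alpha> (r * n) (rooted_product_adj r adjR n adjH) $$ (u, v) =
      (kron (1\<^sub>m r) (A_alpha \<alpha> n adjH) + kron (A_alpha \<alpha> r adjR) (root_mat n)) $$ (u, v)"
    unfolding lhs rhs index_A_alpha[OF u(3) v(3)] index_A_alpha[OF u(2) v(2)] index_root_mat[OF u(3) v(3)]
    using irr by (auto simp: algebra_simps)
qed auto

lemma char_poly_eq_prod_list_Spec:
  assumes "M \<in> carrier_mat n n" and "mset as = Spec M"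
  shows "char_poly (map_mat complex_of_real M) = (\<Prod>a\<leftarrow>as. [:- a, 1:])" and "length as = n"
proof -
  show cp: "char_poly (map_mat complex_of_real M) = (\<Prod>a\<leftarrow>as. [:- a, 1:])"
    using char_poly_eq_prod_Spec[OF assms(1)] assms(2) by (metis prod_mset_prod_list mset_map)
  show "length as = n"
    using degree_monic_char_poly[of "map_mat complex_of_real M" n] degree_linear_factors[of uminus as]
      assms(1) cp by simp
qed

lemma Spec_kron_sum:
  assumes A: "A \<in> carrier_mat r r" and B: "B \<in> carrier_mat n n" and C: "C \<in> carrier_mat n n"
    and spec: "mset (map complex_of_real \<rho>) = Spec A"
  shows "Spec (kron (1\<^sub>m r) B + kron A C) = (\<Sum>j<r. Spec (B + \<rho> ! j \<cdot>\<^sub>m C))"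
proof (rule Spec_eqI)
  let ?c = "map_mat complex_of_real" and ?\<rho> = "map complex_of_real \<rho>"
  note cpA = char_poly_eq_prod_list_Spec[OF A spec]
  have "char_poly (?c (kron (1\<^sub>m r) B + kron A C)) = char_poly (kron (1\<^sub>m r) (?c B) + kron (?c A) (?c C))"
    using A B C by (simp add: of_real_hom.mat_hom_add[of _ "r * n" "r * n"]
        of_real_hom.mat_hom_kron of_real_hom.mat_hom_one)
  also have "\<dots> = (\<Prod>j<r. char_poly (?c B + ?\<rho> ! j \<cdot>\<^sub>m ?c C))"
    using A B C cpA(1) by (intro char_poly_kron_sum[where n = n]) simp_all
  also have "\<dots> = (\<Prod>j<r. \<Prod>x\<in>#Spec (B + \<rho> ! j \<cdot>\<^sub>m C). [:- x, 1:])"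
  proof (intro prod.cong refl)
    fix j assume "j \<in> {..<r}"
    then have "?c (B + \<rho> ! j \<cdot>\<^sub>m C) = ?c B + ?\<rho> ! j \<cdot>\<^sub>m ?c C"
      using B C cpA(2) by (simp add: of_real_hom.mat_hom_add[of _ n n] of_real_hom.mat_hom_smult)
    then show "char_poly (?c B + ?\<rho> ! j \<cdot>\<^sub>m ?c C) = (\<Prod>x\<in>#Spec (B + \<rho> ! j \<cdot>\<^sub>m C). [:- x, 1:])"
      using char_poly_eq_prod_Spec[of "B + \<rho> ! j \<cdot>\<^sub>m C" n] B C by simp
  qed
  also have "\<dots> = (\<Prod>x\<in>#(\<Sum>j<r. Spec (B + \<rho> ! j \<cdot>\<^sub>m C)). [:- x, 1:])"
    by (rule prod_mset_image_sum[symmetric])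
  finally show "char_poly (?c (kron (1\<^sub>m r) B + kron A C)) =
      (\<Prod>x\<in>#(\<Sum>j<r. Spec (B + \<rho> ! j \<cdot>\<^sub>m C)). [:- x, 1:])" .
qed

theorem theorem1:
  fixes r n :: nat and adjR adjH :: "nat \<Rightarrow> nat \<Rightarrow> bool" and \<alpha> :: real
    and \<rho> :: "real list"
  assumes "simple_graph r adjR" and "connected_graph r adjR"
    and "simple_graph n adjH" and "n \<ge> 1"
    and "0 \<le> \<alpha>" and "\<alpha> \<le> 1"
    and "mset (map complex_of_real \<rho>) = Spec (A_alpha \<alpha> r adjR)"
  shows "Spec (A_alpha \<alpha> (r * n) (rooted_product_adj r adjR n adjH)) =
         (\<Sum>j<r. Spec (A_alpha \<alpha> n adjH + \<rho> ! j \<cdot>\<^sub>m root_mat n))"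
  unfolding A_alpha_rooted_product[OF assms(1,3)]
  by (rule Spec_kron_sum[where n = n, OF _ _ _ assms(7)]) simp_all

end
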